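(* Let $\mu$ be a probability measure supported on a symmetric convex domain $\Omega\subset\mathbb R^n$ satisfying the dilation inequality for $\mathcal K_s^n(\Omega)$ with constant $\kappa>0$. Let $f$ be a positive, continuous, symmetric quasi-convex function on $\Omega$ with $$0<\beta:=\frac1{\kappa\log2}\|f^{-1}\Phi_f\|_{L^\infty}<+\infty,$$ and suppose that for some $0<p<1/\beta$ we have $f^p\in\mathrm{QC}(\Omega,\mu)$ and $f^{-p}\in L^1(\mu)$. Then $$\mathrm{med}(f)\le\Big(\frac{e}{1-\beta p}\Big)^\beta\|f\|_{L^{-p}(\mu)},$$ where $\|f\|_{L^{-p}(\mu)}:=(\int_\Omega f^{-p}d\mu)^{-1/p}$ and $\mathrm{med}(f)$ is a L\'evy mean of $f$: $\mu(\{f\ge\mathrm{med}(f)\})\ge\frac12$ and $\mu(\{f\le\mathrm{med}(f)\})\ge\frac12$.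
   Context: Symmetric set: $K=-K$; symmetric function: $f(x)=f(-x)$; quasi-convex: $\{f<\lambda\}$ convex for all $\lambda$. Symmetric convex domain: nonempty open convex $\Omega=-\Omega\subset\mathbb R^n$. $\mathcal K_s^n(\Omega)$: nonempty symmetric open convex subsets of $\Omega$. For Borel $A$, $\varepsilon\in(0,1)$: $A_\varepsilon:=A\cup\{x:\exists y,\ \int_0^1\mathbf 1_A((1-t)x+ty)\,dt>1-\varepsilon\}$; $\mu^*(A):=\liminf_{\varepsilon\downarrow0}(\mu(A_\varepsilon)-\mu(A))/\varepsilon$. Dilation inequality with $\kappa$: $\mu^*(K)\ge-\kappa(1-\mu(K))\log(1-\mu(K))$ for all $K\in\mathcal K_s^n(\Omega)$. $\Phi_f(x):=\limsup_{\varepsilon\downarrow0}\frac{f(x)-f(\frac{1-\varepsilon}{1+\varepsilon}x)}{\varepsilon}$; $\|f^{-1}\Phi_f\|_{L^\infty}$ is the $\mu$-essential supremum of $\Phi_f/f$ on $\Omega$. $\mathrm{QC}(\Omega,\mu)$: all nonnegative, continuous, symmetric quasi-convex $g$ on $\Omega$ for which there exist a nonnegative Borel $h\in L^1(\mu)$ and $\varepsilon_0\in(0,1]$ with $\sup_{\varepsilon\in(0,\varepsilon_0)}\frac{g(x)-g(\frac{1-\varepsilon}{1+\varepsilon}x)}{\varepsilon}\le h(x)$ for all $x\in\Omega$. *)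

theory Defs
  imports "HOL-Probability.Probability"
begin

definition sym_set :: "'a::real_vector set \<Rightarrow> bool" where
  "sym_set K \<longleftrightarrow> uminus ` K = K"

definition sym_convex_domain :: "'a::euclidean_space set \<Rightarrow> bool" where
  "sym_convex_domain \<Omega> \<longleftrightarrow> \<Omega> \<noteq> {} \<and> open \<Omega> \<and> convex \<Omega> \<and> sym_set \<Omega>"

definition Ksym :: "'a::euclidean_space set \<Rightarrow> 'a set set" where
  "Ksym \<Omega> = {K. K \<subseteq> \<Omega> \<and> K \<noteq> {} \<and> open K \<and> convex K \<and> sym_set K}"

definition sym_fun_on :: "'a::real_vector set \<Rightarrow> ('a \<Rightarrow> real) \<Rightarrow> bool" where
  "sym_fun_on \<Omega> f \<longleftrightarrow> (\<forall>x\<in>\<Omega>. f (- x) = f x)"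

definition quasi_convex_on :: "'a::real_vector set \<Rightarrow> ('a \<Rightarrow> real) \<Rightarrow> bool" where
  "quasi_convex_on \<Omega> f \<longleftrightarrow> (\<forall>c. convex {x\<in>\<Omega>. f x < c})"

definition dil_set :: "'a::euclidean_space set \<Rightarrow> real \<Rightarrow> 'a set" where
  "dil_set A \<epsilon> = A \<union> {x. \<exists>y. (LINT t:{0..1}|lborel. indicator A ((1 - t) *\<^sub>R x + t *\<^sub>R y)) > 1 - \<epsilon>}"

definition dil_measure :: "'a::euclidean_space measure \<Rightarrow> 'a set \<Rightarrow> ereal" where
  "dil_measure \<mu> A =
     Liminf (at_right 0) (\<lambda>\<epsilon>. ereal ((measure \<mu> (dil_set A \<epsilon>) - measure \<mu> A) / \<epsilon>))"

definition dilation_ineq :: "'a::euclidean_space measure \<Rightarrow> 'a set \<Rightarrow> real \<Rightarrow> bool" where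
  "dilation_ineq \<mu> \<Omega> \<kappa> \<longleftrightarrow>
     (\<forall>K\<in>Ksym \<Omega>. dil_measure \<mu> K \<ge>
        ereal (- \<kappa> * (1 - measure \<mu> K) * ln (1 - measure \<mu> K)))"

definition Phi :: "('a::real_vector \<Rightarrow> real) \<Rightarrow> 'a \<Rightarrow> ereal" where
  "Phi f x = Limsup (at_right 0)
     (\<lambda>\<epsilon>. ereal ((f x - f (((1 - \<epsilon>) / (1 + \<epsilon>)) *\<^sub>R x)) / \<epsilon>))"

definition esssup_on :: "'a measure \<Rightarrow> 'a set \<Rightarrow> ('a \<Rightarrow> ereal) \<Rightarrow> ereal" where
  "esssup_on \<mu> \<Omega> g = Inf {C. AE x in \<mu>. x \<in> \<Omega> \<longrightarrow> g x \<le> C}"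

definition QC :: "'a::euclidean_space set \<Rightarrow> 'a measure \<Rightarrow> ('a \<Rightarrow> real) set" where
  "QC \<Omega> \<mu> = {g. (\<forall>x\<in>\<Omega>. g x \<ge> 0) \<and> continuous_on \<Omega> g \<and> sym_fun_on \<Omega> g \<and>
      quasi_convex_on \<Omega> g \<and>
      (\<exists>h \<epsilon>\<^sub>0. h \<in> borel_measurable borel \<and> (\<forall>x. h x \<ge> 0) \<and> integrable \<mu> h \<and>
         0 < \<epsilon>\<^sub>0 \<and> \<epsilon>\<^sub>0 \<le> 1 \<and>
         (\<forall>x\<in>\<Omega>. \<forall>\<epsilon>\<in>{0<..<\<epsilon>\<^sub>0}. (g x - g (((1 - \<epsilon>) / (1 + \<epsilon>)) *\<^sub>R x)) / \<epsilon> \<le> h x))}"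

definition levy_mean :: "'a measure \<Rightarrow> 'a set \<Rightarrow> ('a \<Rightarrow> real) \<Rightarrow> real \<Rightarrow> bool" where
  "levy_mean \<mu> \<Omega> f m \<longleftrightarrow>
     measure \<mu> {x\<in>\<Omega>. f x \<ge> m} \<ge> 1/2 \<and> measure \<mu> {x\<in>\<Omega>. f x \<le> m} \<ge> 1/2"

end

theory Submission
  imports Defs
begin

text \<open>
  For levels t above f 0 = min f the sublevel sets K_t = {f < t} are symmetric open convex
  subsets of \<Omega>, and a point of the \<epsilon>-dilation of K_t is mapped into K_t by the contraction
  x \<mapsto> c_\<epsilon> x, c_\<epsilon> = (1 - \<epsilon>)/(1 + \<epsilon>). Hence the dilation inequality, combined with
  -(1 - u) ln (1 - u) \<ge> u ln 2 for u \<le> 1/2, says that for t up to the median m the mass of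
  {f(c_\<epsilon> x) < t \<le> f x} grows at least like \<epsilon> \<kappa> ln 2 \<mu>(K_t). Integrating over t \<in> (f 0, m]
  against p t^(-p-1) dt (layer cake) and using Fatou's lemma gives a lower bound
  \<kappa> ln 2 \<integral> (min(f,m)^(-p) - m^(-p)) for the liminf of the difference quotients of min(f,m)^(-p)
  along the contractions. The QC hypothesis dominates these quotients, so by reverse Fatou their
  limsup is at most p \<integral> f^(-p-1) \<Phi>_f \<le> p \<kappa> ln 2 \<beta> \<integral> f^(-p). Thus (1 - \<beta> p) \<integral> f^(-p) \<le> m^(-p),
  which is stronger than the claim since 1/(1 - t) \<le> (e/(1 - t))^t.
\<close>

lemma ln_2_mul_le_neg_mult_ln:
  fixes u :: real
  assumes "0 \<le> u" "u \<le> 1/2"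
  shows "ln 2 * u \<le> - (1 - u) * ln (1 - u)"
proof -
  define y where "y = 1 / (1 - u)"
  have y: "1 \<le> y" "y \<le> 2" using assms by (auto simp: y_def field_simps)
  have "exp ((1 - (y - 1)) *\<^sub>R 0 + (y - 1) *\<^sub>R ln 2) \<le> (1 - (y - 1)) * exp 0 + (y - 1) * exp (ln 2)"
    using y by (intro convex_onD[OF exp_convex]) auto
  then have "exp ((y - 1) * ln 2) \<le> exp (ln y)" using y by simp
  then have "(y - 1) * ln 2 \<le> - ln (1 - u)" using assms by (simp add: y_def ln_div)
  then have "(1 - u) * ((y - 1) * ln 2) \<le> (1 - u) * - ln (1 - u)"
    using assms by (intro mult_left_mono) auto
  moreover have "(1 - u) * ((y - 1) * ln 2) = u * ln 2"
    using assms by (simp add: y_def field_simps)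
  ultimately show ?thesis by (simp add: algebra_simps)
qed

lemma powr_neg_diff_le_tangent:
  fixes a b p :: real
  assumes "0 < a" "a \<le> b" "0 < p"
  shows "a powr - p - b powr - p \<le> p * a powr (- p - 1) * (b - a)"
proof -
  have "b powr - p = a powr - p * exp (- p * ln (b / a))"
    using assms by (simp add: powr_def ln_div algebra_simps flip: exp_add)
  moreover have "1 - p * (b / a - 1) \<le> exp (- p * ln (b / a))"
  proof -
    have "ln (b / a) \<le> b / a - 1" using assms by (intro ln_le_minus_one) auto
    then have "1 - p * (b / a - 1) \<le> 1 + - p * ln (b / a)"
      using assms by (simp add: mult_left_mono)
    also have "\<dots> \<le> exp (- p * ln (b / a))" by (rule exp_ge_add_one_self)
    finally show ?thesis .
  qed
  ultimately have "a powr - p * (1 - p * (b / a - 1)) \<le> b powr - p"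
    using assms by simp
  moreover have "a powr - p * (p * (b / a - 1)) = p * a powr (- p - 1) * (b - a)"
    using assms by (simp add: powr_diff field_simps powr_minus)
  ultimately show ?thesis by (simp add: algebra_simps)
qed

lemma powr_neg_diff_le_powr_diff:
  fixes a b p l :: real
  assumes "0 < l" "l \<le> a" "a \<le> b" "0 < p"
  shows "a powr - p - b powr - p \<le> (b powr p - a powr p) / l powr (2 * p)"
proof -
  have pos: "0 < a powr p" "0 < b powr p" "0 < l powr p" using assms by auto
  have "a powr - p - b powr - p = (b powr p - a powr p) / (a powr p * b powr p)"
    using pos by (simp add: powr_minus field_simps)
  also have "\<dots> \<le> (b powr p - a powr p) / (l powr p * l powr p)"
    using assms pos by (intro divide_left_mono mult_mono powr_mono2) (auto intro: powr_mono2)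
  also have "l powr p * l powr p = l powr (2 * p)" by (simp flip: powr_add)
  finally show ?thesis .
qed

lemma min_powr_neg_diff_le:
  fixes a b m p :: real
  assumes "0 < a" "a \<le> b" "0 < m" "0 < p"
  shows "min a m powr - p - min b m powr - p \<le> a powr - p - b powr - p"
proof -
  have "b powr - p \<le> a powr - p" "b powr - p \<le> m powr - p" if "m \<le> b"
    using assms that by (auto intro: powr_mono2')
  then show ?thesis using assms by (cases "a \<le> m"; cases "b \<le> m") auto
qed

lemma le_powr_of_inverse_moment_bound:
  fixes p t m I :: real
  assumes "0 < p" "0 < t" "t < 1" "0 < m" "0 < I" "I \<le> m powr - p / (1 - t)"
  shows "m \<le> (exp 1 / (1 - t)) powr (t / p) * I powr (- 1 / p)"
proof -
  have "- ln (1 - t) \<le> t / (1 - t)"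
    using ln_le_minus_one[of "1 / (1 - t)"] assms by (simp add: ln_div field_simps)
  then have key: "0 \<le> t + (1 - t) * ln (1 - t)" using assms by (simp add: field_simps)
  have "ln I \<le> ln (m powr - p / (1 - t))" using assms by simp
  also have "\<dots> = - p * ln m - ln (1 - t)" using assms by (simp add: ln_div ln_powr)
  finally have "ln I / p \<le> (- p * ln m - ln (1 - t)) / p"
    using assms by (intro divide_right_mono) auto
  then have "ln m + ln (1 - t) / p \<le> (- 1 / p) * ln I"
    using assms by (simp add: diff_divide_distrib)
  moreover have "(t / p) * (1 - ln (1 - t)) + ln (1 - t) / p = (t + (1 - t) * ln (1 - t)) / p"
    using assms by (simp add: field_simps)
  ultimately have "ln m \<le> (t / p) * (1 - ln (1 - t)) + (- 1 / p) * ln I"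
    using key assms by (smt (verit) divide_nonneg_pos)
  then have "exp (ln m) \<le> exp ((t / p) * (1 - ln (1 - t)) + (- 1 / p) * ln I)" by simp
  also have "\<dots> = (exp 1 / (1 - t)) powr (t / p) * I powr (- 1 / p)"
    using assms by (simp add: powr_def ln_div flip: exp_add)
  finally show ?thesis using assms by simp
qed

lemma sym_set_iff_uminus_mem: "sym_set K \<longleftrightarrow> (\<forall>x\<in>K. - x \<in> K)"
  unfolding sym_set_def by (auto intro: image_eqI[of _ uminus "- _"])

lemma scaleR_mem_sym_convex:
  fixes K :: "'a::real_vector set"
  assumes "convex K" "sym_set K" "x \<in> K" "0 \<le> c" "c \<le> 1"
  shows "c *\<^sub>R x \<in> K"
proof -
  have "((1 + c) / 2) *\<^sub>R x + ((1 - c) / 2) *\<^sub>R (- x) \<in> K"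
    using assms by (intro convexD) (auto simp: sym_set_iff_uminus_mem field_simps)
  moreover have "((1 + c) / 2) *\<^sub>R x + ((1 - c) / 2) *\<^sub>R (- x) = ((1 + c) / 2 - (1 - c) / 2) *\<^sub>R x"
    by (simp add: scaleR_diff_left)
  moreover have "(1 + c) / 2 - (1 - c) / 2 = c" by (simp add: field_simps)
  ultimately show ?thesis by simp
qed

lemma sym_set_sublevel:
  assumes "sym_set \<Omega>" "sym_fun_on \<Omega> f"
  shows "sym_set {x\<in>\<Omega>. f x < t}"
  using assms by (auto simp: sym_set_iff_uminus_mem sym_fun_on_def)

lemma sym_quasi_convex_scaleR_le:
  fixes f :: "'a::real_vector \<Rightarrow> real"
  assumes "sym_set \<Omega>" "sym_fun_on \<Omega> f" "quasi_convex_on \<Omega> f"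
    and "x \<in> \<Omega>" "0 \<le> c" "c \<le> 1"
  shows "f (c *\<^sub>R x) \<le> f x"
proof (rule ccontr)
  assume "\<not> f (c *\<^sub>R x) \<le> f x"
  then have "x \<in> {y\<in>\<Omega>. f y < f (c *\<^sub>R x)}" using assms by simp
  then have "c *\<^sub>R x \<in> {y\<in>\<Omega>. f y < f (c *\<^sub>R x)}"
    using assms sym_set_sublevel by (intro scaleR_mem_sym_convex) (auto simp: quasi_convex_on_def)
  then show False by simp
qed

lemma occupation_gt_imp_ratio_lt:
  fixes K :: "'a::euclidean_space set"
  assumes "0 < \<epsilon>" "\<epsilon> < 1"
    and "(LINT t:{0..1}|lborel. indicator K ((1 - t) *\<^sub>R x + t *\<^sub>R y)) > 1 - \<epsilon>"
  shows "\<exists>s r. s \<in> {0..1} \<and> r \<in> {0..1} \<and> (1 - s) *\<^sub>R x + s *\<^sub>R y \<in> K \<and>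
      (1 - r) *\<^sub>R x + r *\<^sub>R y \<in> K \<and> s < \<epsilon> * r"
proof (rule ccontr)
  assume H: "\<not> ?thesis"
  define T where "T = {t\<in>{0..1}. (1 - t) *\<^sub>R x + t *\<^sub>R y \<in> K}"
  have ratio: "\<epsilon> * r \<le> s" if "s \<in> T" "r \<in> T" for s r using H that unfolding T_def by force
  have eq: "(LINT t:{0..1}|lborel. (indicator K ((1 - t) *\<^sub>R x + t *\<^sub>R y) :: real))
      = (\<integral>t. (indicator T t :: real) \<partial>lborel)"
    unfolding set_lebesgue_integral_def
    by (intro Bochner_Integration.integral_cong) (auto simp: T_def indicator_def)
  show False
  proof (cases "T = {}")
    case True
    then show ?thesis using assms eq by simp
  next
    case False
    define S where "S = Sup T"
    have bdd: "bdd_above T" unfolding T_def by (rule bdd_aboveI[of _ 1]) auto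
    have S1: "S \<le> 1" unfolding S_def using False by (intro cSup_least) (auto simp: T_def)
    have sub: "T \<subseteq> {\<epsilon> * S .. S}"
    proof
      fix s assume s: "s \<in> T"
      have "s \<le> S" unfolding S_def using bdd s by (rule cSup_upper[rotated])
      moreover have "S \<le> s / \<epsilon>"
        unfolding S_def using False ratio[OF s] assms by (intro cSup_least) (auto simp: field_simps)
      ultimately show "s \<in> {\<epsilon> * S .. S}" using assms by (auto simp: field_simps)
    qed
    then have S0: "0 \<le> S" using False assms by (auto simp: mult_le_cancel_right1)
    have "(\<integral>t. indicator T t \<partial>lborel) \<le> (\<integral>t. (indicator {\<epsilon> * S .. S} t :: real) \<partial>lborel)"
    proof (rule integral_mono_AE')
      show "integrable lborel (indicator {\<epsilon> * S..S} :: real \<Rightarrow> real)"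
        by (intro integrable_real_indicator) (auto simp: emeasure_lborel_Icc_eq)
      show "AE t in lborel. indicator T t \<le> (indicator {\<epsilon> * S..S} t :: real)"
        using sub by (intro AE_I2) (auto simp: indicator_def)
    qed auto
    also have "\<dots> = S - \<epsilon> * S" using S0 assms by (simp add: mult_le_cancel_right1 mult_left_le_one_le)
    also have "\<dots> = (1 - \<epsilon>) * S" by (simp add: algebra_simps)
    also have "\<dots> \<le> 1 - \<epsilon>" using S1 assms by (simp add: mult_left_le)
    finally show False using assms eq by linarith
  qed
qed

lemma shrink_mem_of_mem_dil_set:
  fixes K :: "'a::euclidean_space set"
  assumes K: "convex K" "sym_set K" and \<epsilon>: "0 < \<epsilon>" "\<epsilon> < 1" and x: "x \<in> dil_set K \<epsilon>"
  shows "((1 - \<epsilon>) / (1 + \<epsilon>)) *\<^sub>R x \<in> K"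
proof (cases "x \<in> K")
  case True
  then show ?thesis using K \<epsilon> by (intro scaleR_mem_sym_convex) auto
next
  case False
  then obtain y where "(LINT t:{0..1}|lborel. indicator K ((1 - t) *\<^sub>R x + t *\<^sub>R y)) > 1 - \<epsilon>"
    using x unfolding dil_set_def by auto
  from occupation_gt_imp_ratio_lt[OF \<epsilon> this] obtain s r where sr: "s \<in> {0..1}" "r \<in> {0..1}"
    "(1 - s) *\<^sub>R x + s *\<^sub>R y \<in> K" "(1 - r) *\<^sub>R x + r *\<^sub>R y \<in> K" "s < \<epsilon> * r" by blast
  define u where "u = (1 - s) *\<^sub>R x + s *\<^sub>R y"
  define w where "w = (1 - r) *\<^sub>R x + r *\<^sub>R y"
  have "s < r" using sr \<epsilon> mult_right_mono[of \<epsilon> 1 r] by auto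
  define \<alpha> where "\<alpha> = s / (r - s)"
  have \<alpha>: "0 \<le> \<alpha>" using sr \<open>s < r\<close> by (auto simp: \<alpha>_def)
  \<comment> \<open>x extrapolates the segment from w through u, so a multiple of x is a convex combination of u and -w\<close>
  have "x = (1 + \<alpha>) *\<^sub>R u + \<alpha> *\<^sub>R (- w)"
  proof -
    have "(1 + \<alpha>) *\<^sub>R u + \<alpha> *\<^sub>R (- w) = u + \<alpha> *\<^sub>R ((r - s) *\<^sub>R (x - y))"
      by (simp add: u_def w_def algebra_simps)
    also have "\<alpha> *\<^sub>R ((r - s) *\<^sub>R (x - y)) = s *\<^sub>R (x - y)" using \<open>s < r\<close> by (simp add: \<alpha>_def)
    also have "u + s *\<^sub>R (x - y) = x" by (simp add: u_def algebra_simps)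
    finally show ?thesis by simp
  qed
  then have "(1 / (1 + 2 * \<alpha>)) *\<^sub>R x = ((1 + \<alpha>) / (1 + 2 * \<alpha>)) *\<^sub>R u + (\<alpha> / (1 + 2 * \<alpha>)) *\<^sub>R (- w)"
    using \<alpha> by (simp add: scaleR_add_right scaleR_diff_right divide_inverse mult.commute)
  also have "\<dots> \<in> K"
    using K sr \<alpha> by (intro convexD) (auto simp: u_def w_def sym_set_iff_uminus_mem add_divide_distrib[symmetric])
  finally have xK: "(1 / (1 + 2 * \<alpha>)) *\<^sub>R x \<in> K" .
  have "(1 - \<epsilon>) * (r + s) \<le> (1 + \<epsilon>) * (r - s)" using sr(5) by (simp add: algebra_simps)
  then have "((1 - \<epsilon>) * (r + s)) / ((1 + \<epsilon>) * (r - s)) \<le> 1"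
    using \<open>s < r\<close> \<epsilon> by (intro divide_le_eq_1_pos[THEN iffD2]) auto
  moreover have "1 + 2 * \<alpha> = (r + s) / (r - s)" using \<open>s < r\<close> by (simp add: \<alpha>_def field_simps)
  ultimately have "(1 - \<epsilon>) / (1 + \<epsilon>) * (1 + 2 * \<alpha>) \<le> 1" by simp
  then have "((1 - \<epsilon>) / (1 + \<epsilon>) * (1 + 2 * \<alpha>)) *\<^sub>R ((1 / (1 + 2 * \<alpha>)) *\<^sub>R x) \<in> K"
    using \<epsilon> \<alpha> by (intro scaleR_mem_sym_convex[OF K xK]) auto
  then show ?thesis using \<alpha> by simp
qed

lemma nn_integral_Ioc_powr_neg:
  fixes l m p a b :: real
  assumes l: "0 < l" "l \<le> a" and "0 < b" "0 < m" "0 < p"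
  shows "(\<integral>\<^sup>+t. indicator {l<..m} t * indicator {a<..b} t * ennreal (p * t powr (- p - 1)) \<partial>lborel)
       = ennreal (min a m powr - p - min b m powr - p)"
proof (cases "a < min m b")
  case True
  have "(\<integral>\<^sup>+t. indicator {l<..m} t * indicator {a<..b} t * ennreal (p * t powr (- p - 1)) \<partial>lborel)
      = (\<integral>\<^sup>+t. ennreal (p * t powr (- p - 1)) * indicator {a..min m b} t \<partial>lborel)"
    using AE_lborel_singleton[of a]
    by (intro nn_integral_cong_AE, eventually_elim) (use l in \<open>auto simp: indicator_def\<close>)
  also have "\<dots> = ennreal (- (min m b powr - p) - - (a powr - p))"
  proof (rule nn_integral_FTC_Icc)
    fix t assume "t \<in> {a..min m b}"
    then have "0 < t" using l by auto
    show "((\<lambda>z. - (z powr - p)) has_real_derivative p * t powr (- p - 1)) (at t)"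
      using has_real_derivative_powr[OF \<open>0 < t\<close>, of "- p"] DERIV_minus by fastforce
    show "0 \<le> p * t powr (- p - 1)" using assms by simp
  qed (use True in auto)
  also have "- (min m b powr - p) - - (a powr - p) = min a m powr - p - min b m powr - p"
    using True by (auto simp: min_def split: if_splits)
  finally show ?thesis .
next
  case False
  then have "(\<lambda>t. indicator {l<..m} t * indicator {a<..b} t * ennreal (p * t powr (- p - 1))) = (\<lambda>t. 0)"
    using l by (auto simp: indicator_def fun_eq_iff)
  moreover have "min b m \<le> min a m" using False by (auto simp: min_def split: if_splits)
  then have "min a m powr - p - min b m powr - p \<le> 0"
    using assms by (simp add: powr_mono2')
  ultimately show ?thesis by (simp add: ennreal_eq_0_iff)
qed

lemma nn_integral_layer_cake_powr:
  fixes M :: "'a measure" and g1 g2 :: "'a \<Rightarrow> real"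
  assumes "sigma_finite_measure M"
    and [measurable]: "g1 \<in> borel_measurable M" "g2 \<in> borel_measurable M" "A \<in> sets M"
    and "0 < l" "0 < m" "0 < p" "0 \<le> c" and g: "\<And>x. x \<in> A \<Longrightarrow> l \<le> g1 x \<and> 0 < g2 x"
  shows "(\<integral>\<^sup>+t. indicator {l<..m} t * ennreal (c * (p * t powr (- p - 1))) *
            emeasure M {x\<in>A. g1 x < t \<and> t \<le> g2 x} \<partial>lborel)
       = (\<integral>\<^sup>+x. indicator A x * ennreal (c * (min (g1 x) m powr - p - min (g2 x) m powr - p)) \<partial>M)"
proof -
  interpret M: sigma_finite_measure M by fact
  interpret pair_sigma_finite lborel M by unfold_locales
  define w where "w t = indicator {l<..m} t * ennreal (c * (p * t powr (- p - 1)))" for t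
  have [measurable]: "w \<in> borel_measurable borel" unfolding w_def by measurable
  have "(\<integral>\<^sup>+t. w t * emeasure M {x\<in>A. g1 x < t \<and> t \<le> g2 x} \<partial>lborel)
      = (\<integral>\<^sup>+t. (\<integral>\<^sup>+x. w t * indicator {x\<in>A. g1 x < t \<and> t \<le> g2 x} x \<partial>M) \<partial>lborel)"
    by (intro nn_integral_cong) (simp add: nn_integral_cmult)
  also have "\<dots> = (\<integral>\<^sup>+x. (\<integral>\<^sup>+t. w t * indicator {x\<in>A. g1 x < t \<and> t \<le> g2 x} x \<partial>lborel) \<partial>M)"
    by (rule Fubini'[symmetric]) measurable
  also have "\<dots> = (\<integral>\<^sup>+x. indicator A x * ennreal (c * (min (g1 x) m powr - p - min (g2 x) m powr - p)) \<partial>M)"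
  proof (intro nn_integral_cong)
    fix x
    show "(\<integral>\<^sup>+t. w t * indicator {x\<in>A. g1 x < t \<and> t \<le> g2 x} x \<partial>lborel)
        = indicator A x * ennreal (c * (min (g1 x) m powr - p - min (g2 x) m powr - p))"
    proof (cases "x \<in> A")
      case True
      have "(\<integral>\<^sup>+t. w t * indicator {x\<in>A. g1 x < t \<and> t \<le> g2 x} x \<partial>lborel)
          = (\<integral>\<^sup>+t. ennreal c * (indicator {l<..m} t * indicator {g1 x<..g2 x} t *
                ennreal (p * t powr (- p - 1))) \<partial>lborel)"
        using True assms by (intro nn_integral_cong) (auto simp: w_def indicator_def ennreal_mult)
      also have "\<dots> = ennreal c * ennreal (min (g1 x) m powr - p - min (g2 x) m powr - p)"
        using True g assms by (simp add: nn_integral_cmult nn_integral_Ioc_powr_neg)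
      finally show ?thesis using True assms by (simp add: ennreal_mult')
    qed (simp add: indicator_def)
  qed
  finally show ?thesis by (simp add: w_def)
qed

lemma AE_le_esssup_on:
  assumes "esssup_on \<mu> \<Omega> g = ereal b"
  shows "AE x in \<mu>. x \<in> \<Omega> \<longrightarrow> g x \<le> ereal b"
proof -
  have "AE x in \<mu>. x \<in> \<Omega> \<longrightarrow> g x \<le> ereal (b + 1 / Suc n)" for n :: nat
  proof -
    have "esssup_on \<mu> \<Omega> g < ereal (b + 1 / Suc n)" using assms by simp
    then obtain C where "AE x in \<mu>. x \<in> \<Omega> \<longrightarrow> g x \<le> C" "C < ereal (b + 1 / Suc n)"
      by (auto simp: esssup_on_def Inf_less_iff)
    then show ?thesis by (auto elim!: eventually_mono)
  qed
  then have "AE x in \<mu>. \<forall>n::nat. x \<in> \<Omega> \<longrightarrow> g x \<le> ereal (b + 1 / Suc n)"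
    by (subst AE_all_countable) blast
  then show ?thesis
  proof (rule eventually_mono, intro impI)
    fix x assume x: "\<forall>n::nat. x \<in> \<Omega> \<longrightarrow> g x \<le> ereal (b + 1 / Suc n)" "x \<in> \<Omega>"
    then have "g x \<le> ereal (b + 1)" by (metis One_nat_def div_by_1 of_nat_1)
    moreover have "r \<le> b" if "g x = ereal r" for r
    proof (rule field_le_epsilon)
      fix \<delta> :: real assume "0 < \<delta>"
      then obtain n :: nat where "inverse (real (Suc n)) < \<delta>" using reals_Archimedean by blast
      moreover have "r \<le> b + 1 / Suc n" using x that by force
      ultimately show "r \<le> b + \<delta>" by (simp add: divide_inverse)
    qed
    ultimately show "g x \<le> ereal b" by (cases "g x") auto
  qed
qed

lemma limsup_powr_neg_quotient_le:
  fixes a e :: "nat \<Rightarrow> real"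
  assumes "0 < s" "\<And>n. 0 < a n" "\<And>n. a n \<le> s" "a \<longlonglongrightarrow> s" "\<And>n. 0 < e n" "0 < p" "0 \<le> d"
    and quot: "\<And>y. d < y \<Longrightarrow> eventually (\<lambda>n. (s - a n) / e n < y) sequentially"
  shows "limsup (\<lambda>n. ennreal ((a n powr - p - s powr - p) / e n)) \<le> ennreal (p * s powr (- p - 1) * d)"
  unfolding Limsup_le_iff
proof (intro allI impI)
  define q where "q = p * s powr (- p - 1)"
  have "0 < q" using assms by (simp add: q_def)
  fix C assume C: "ennreal (q * d) < C"
  show "eventually (\<lambda>n. ennreal ((a n powr - p - s powr - p) / e n) < C) sequentially"
  proof (cases C)
    case (real c)
    then have "q * d < c" using C \<open>0 < q\<close> assms by (simp add: ennreal_less_iff)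
    then have "d < c / q" using \<open>0 < q\<close> by (simp add: field_simps)
    then obtain y where y: "d < y" "y < c / q" using dense by blast
    then have "0 < y" "q < c / y" using \<open>0 < q\<close> assms by (auto simp: field_simps)
    then obtain z where "q < z" "z < c / y" using dense by blast
    then have z: "q < z" "z * y < c" using \<open>0 < y\<close> by (auto simp: field_simps)
    have "(\<lambda>n. p * a n powr (- p - 1)) \<longlonglongrightarrow> q"
      unfolding q_def using assms by (intro tendsto_intros) auto
    then have "eventually (\<lambda>n. p * a n powr (- p - 1) < z) sequentially"
      using z(1) by (rule order_tendstoD)
    with quot[OF y(1)] show ?thesis
    proof eventually_elim
      case (elim n)
      have "(a n powr - p - s powr - p) / e n \<le> p * a n powr (- p - 1) * ((s - a n) / e n)"
        using powr_neg_diff_le_tangent[of "a n" s p] assms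
        by (simp add: divide_right_mono[of _ _ "e n", simplified] less_imp_le)
      also have "\<dots> \<le> z * y"
        using elim assms(3,5)[of n] \<open>0 < q\<close> z(1) by (intro mult_mono) auto
      finally have "(a n powr - p - s powr - p) / e n < c" using z by linarith
      moreover have "0 < c" using \<open>q * d < c\<close> \<open>0 < q\<close> \<open>0 \<le> d\<close> by (smt (verit) mult_nonneg_nonneg)
      ultimately show ?case unfolding real by (rule ennreal_lessI[rotated])
    qed
  qed simp
qed

lemma ennreal_mult_le_liminf:
  fixes a w :: real and b :: "nat \<Rightarrow> real"
  assumes "0 < w" and lower: "\<And>y. y < a \<Longrightarrow> eventually (\<lambda>n. y < b n) sequentially"
  shows "ennreal (w * a) \<le> liminf (\<lambda>n. ennreal (w * b n))"
  unfolding le_Liminf_iff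
proof (intro allI impI)
  fix z assume z: "z < ennreal (w * a)"
  then obtain y where y: "z = ennreal y" "0 \<le> y" by (cases z) auto
  then have "y / w < a" using z \<open>0 < w\<close> by (auto simp: ennreal_less_iff field_simps)
  from lower[OF this] show "eventually (\<lambda>n. z < ennreal (w * b n)) sequentially"
  proof eventually_elim
    case (elim n)
    then have "y < w * b n" using \<open>0 < w\<close> by (simp add: field_simps)
    with y show ?case by (simp add: ennreal_lessI)
  qed
qed

lemma measurable_emeasure_layer:
  fixes M :: "'a measure" and g1 g2 :: "'a \<Rightarrow> real"
  assumes "sigma_finite_measure M"
    and [measurable]: "g1 \<in> borel_measurable M" "g2 \<in> borel_measurable M" "A \<in> sets M"
  shows "(\<lambda>t. emeasure M {x\<in>A. g1 x < t \<and> t \<le> g2 x}) \<in> borel_measurable borel"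
proof -
  interpret sigma_finite_measure M by fact
  define Q where "Q = {z \<in> space (borel \<Otimes>\<^sub>M M). snd z \<in> A \<and> g1 (snd z) < fst z \<and> fst z \<le> g2 (snd z)}"
  have "Q \<in> sets (borel \<Otimes>\<^sub>M M)" unfolding Q_def by measurable
  moreover have "Pair t -` Q = {x\<in>A. g1 x < t \<and> t \<le> g2 x}" for t
    using sets.sets_into_space[of A M] by (auto simp: Q_def space_pair_measure)
  ultimately show ?thesis using measurable_emeasure_Pair[of Q borel] by simp
qed

lemma QC_dominating_sequence:
  assumes "g \<in> QC \<Omega> \<mu>"
  obtains h e where "integrable \<mu> h" "\<And>n. 0 < e n" "\<And>n. e n < 1" "filterlim e (at_right 0) sequentially"
    "\<And>x n. x \<in> \<Omega> \<Longrightarrow> (g x - g (((1 - e n) / (1 + e n)) *\<^sub>R x)) / e n \<le> h x"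
proof -
  obtain h \<epsilon>\<^sub>0 where h: "integrable \<mu> h" and \<epsilon>\<^sub>0: "0 < \<epsilon>\<^sub>0" "\<epsilon>\<^sub>0 \<le> 1"
    and dom: "\<And>x \<epsilon>. x \<in> \<Omega> \<Longrightarrow> \<epsilon> \<in> {0<..<\<epsilon>\<^sub>0} \<Longrightarrow> (g x - g (((1 - \<epsilon>) / (1 + \<epsilon>)) *\<^sub>R x)) / \<epsilon> \<le> h x"
    using assms unfolding QC_def by blast
  define e where "e n = \<epsilon>\<^sub>0 / (2 + real n)" for n
  have e: "0 < e n" "e n < \<epsilon>\<^sub>0" for n
    using \<epsilon>\<^sub>0 by (auto simp: e_def field_simps add_pos_nonneg)
  have "e \<longlonglongrightarrow> 0"
    unfolding e_def by (intro tendsto_divide_0[OF tendsto_const] filterlim_at_top_imp_at_infinity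
        filterlim_tendsto_add_at_top[OF tendsto_const filterlim_real_sequentially])
  then have "filterlim e (at_right 0) sequentially"
    using e by (intro tendsto_imp_filterlim_at_right) auto
  show ?thesis
  proof (rule that[OF h e(1)])
    show "filterlim e (at_right 0) sequentially" by fact
    show "e n < 1" for n using e(2)[of n] \<epsilon>\<^sub>0 by simp
    show "(g x - g (((1 - e n) / (1 + e n)) *\<^sub>R x)) / e n \<le> h x" if "x \<in> \<Omega>" for x n
      using dom[OF that] e[of n] by simp
  qed
qed

locale sym_qc_setting =
  fixes \<mu> :: "'a::euclidean_space measure" and \<Omega> :: "'a set" and f :: "'a \<Rightarrow> real"
  assumes prob: "prob_space \<mu>" and sets_\<mu>: "sets \<mu> = sets borel"
    and domain: "sym_convex_domain \<Omega>" and full: "measure \<mu> \<Omega> = 1"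
    and pos: "\<And>x. x \<in> \<Omega> \<Longrightarrow> 0 < f x" and cont: "continuous_on \<Omega> f"
    and sym: "sym_fun_on \<Omega> f" and qc: "quasi_convex_on \<Omega> f"
begin

sublocale prob_space \<mu> by (rule prob)

lemma sigma_finite: "sigma_finite_measure \<mu>"
  by unfold_locales

lemma space_\<mu>: "space \<mu> = UNIV"
  using sets_eq_imp_space_eq[OF sets_\<mu>] by simp

lemma sets_\<Omega> [measurable]: "\<Omega> \<in> sets borel"
  using domain by (auto simp: sym_convex_domain_def)

lemma scaleR_mem: "x \<in> \<Omega> \<Longrightarrow> 0 \<le> c \<Longrightarrow> c \<le> 1 \<Longrightarrow> c *\<^sub>R x \<in> \<Omega>"
  using domain by (intro scaleR_mem_sym_convex) (auto simp: sym_convex_domain_def)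

lemma f_scaleR_le: "x \<in> \<Omega> \<Longrightarrow> 0 \<le> c \<Longrightarrow> c \<le> 1 \<Longrightarrow> f (c *\<^sub>R x) \<le> f x"
  using domain sym qc by (intro sym_quasi_convex_scaleR_le) (auto simp: sym_convex_domain_def)

lemma zero_mem: "0 \<in> \<Omega>"
  using domain scaleR_mem[of _ 0] by (auto simp: sym_convex_domain_def)

lemma f_zero_le: "x \<in> \<Omega> \<Longrightarrow> f 0 \<le> f x"
  using f_scaleR_le[of x 0] by simp

text \<open>f need not be measurable outside \<Omega>; its extension by 0 is, and agrees with f under every
  factor indicator \<Omega> below.\<close>
definition fext :: "'a \<Rightarrow> real" where
  "fext x = indicator \<Omega> x * f x"

lemma fext_measurable [measurable]: "fext \<in> borel_measurable borel"
  unfolding fext_def using borel_measurable_continuous_on_indicator[OF sets_\<Omega> cont] by simp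

lemma fext_eq [simp]: "x \<in> \<Omega> \<Longrightarrow> fext x = f x"
  by (simp add: fext_def)

lemma fext_scaleR_eq [simp]: "x \<in> \<Omega> \<Longrightarrow> 0 \<le> c \<Longrightarrow> c \<le> 1 \<Longrightarrow> fext (c *\<^sub>R x) = f (c *\<^sub>R x)"
  by (simp add: scaleR_mem)

lemma sets_scaled_sublevel: "0 \<le> c \<Longrightarrow> c \<le> 1 \<Longrightarrow> {x\<in>\<Omega>. f (c *\<^sub>R x) < t} \<in> sets \<mu>"
proof -
  assume "0 \<le> c" "c \<le> 1"
  then have "{x\<in>\<Omega>. f (c *\<^sub>R x) < t} = {x\<in>\<Omega>. fext (c *\<^sub>R x) < t}" by auto
  also have "\<dots> \<in> sets \<mu>" unfolding sets_\<mu> by measurable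
  finally show ?thesis .
qed

lemma sets_sublevel: "{x\<in>\<Omega>. f x < t} \<in> sets \<mu>"
  using sets_scaled_sublevel[of 1] by simp

lemma measure_scaled_sublevel:
  assumes "0 \<le> c" "c \<le> 1"
  shows "measure \<mu> {x\<in>\<Omega>. f (c *\<^sub>R x) < t}
    = measure \<mu> {x\<in>\<Omega>. f x < t} + measure \<mu> {x\<in>\<Omega>. f (c *\<^sub>R x) < t \<and> t \<le> f x}"
proof -
  have "{x\<in>\<Omega>. f x < t} \<subseteq> {x\<in>\<Omega>. f (c *\<^sub>R x) < t}"
    using f_scaleR_le assms by force
  moreover have "{x\<in>\<Omega>. f (c *\<^sub>R x) < t \<and> t \<le> f x} = {x\<in>\<Omega>. f (c *\<^sub>R x) < t} - {x\<in>\<Omega>. f x < t}"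
    by auto
  ultimately show ?thesis
    using sets_sublevel sets_scaled_sublevel[OF assms] by (simp add: finite_measure_Diff)
qed

lemma sublevel_in_Ksym: "f 0 < t \<Longrightarrow> {x\<in>\<Omega>. f x < t} \<in> Ksym \<Omega>"
proof -
  assume "f 0 < t"
  have "open (f -` {..<t} \<inter> \<Omega>)"
    using cont domain by (auto simp: continuous_on_open_vimage sym_convex_domain_def)
  moreover have "f -` {..<t} \<inter> \<Omega> = {x\<in>\<Omega>. f x < t}" by auto
  ultimately show ?thesis
    using \<open>f 0 < t\<close> zero_mem qc domain sym sym_set_sublevel
    by (auto simp: Ksym_def quasi_convex_on_def sym_convex_domain_def)
qed

lemma measure_dil_set_sublevel_le:
  assumes "0 < \<epsilon>" "\<epsilon> < 1"
  shows "measure \<mu> (dil_set {x\<in>\<Omega>. f x < t} \<epsilon>) \<le> measure \<mu> {x\<in>\<Omega>. f (((1 - \<epsilon>) / (1 + \<epsilon>)) *\<^sub>R x) < t}"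
    (is "measure \<mu> ?D \<le> measure \<mu> ?E")
proof (cases "?D \<in> sets \<mu>")
  case True
  have c: "0 \<le> (1 - \<epsilon>) / (1 + \<epsilon>)" "(1 - \<epsilon>) / (1 + \<epsilon>) \<le> 1" using assms by auto
  have "convex {x\<in>\<Omega>. f x < t}" "sym_set {x\<in>\<Omega>. f x < t}"
    using qc domain sym sym_set_sublevel by (auto simp: quasi_convex_on_def sym_convex_domain_def)
  from shrink_mem_of_mem_dil_set[OF this assms] have "?D \<subseteq> ?E \<union> (UNIV - \<Omega>)" by blast
  then have "measure \<mu> ?D \<le> measure \<mu> (?E \<union> (UNIV - \<Omega>))"
    using True sets_scaled_sublevel[OF c] sets_\<mu> by (intro finite_measure_mono) auto
  also have "\<dots> \<le> measure \<mu> ?E + measure \<mu> (UNIV - \<Omega>)"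
    using sets_scaled_sublevel[OF c] sets_\<mu> by (intro measure_Un_le) auto
  also have "measure \<mu> (UNIV - \<Omega>) = 0"
    using prob_compl[of \<Omega>] sets_\<mu> full space_\<mu> by simp
  finally show ?thesis by simp
qed (simp add: measure_notin_sets)

lemma sublevel_growth:
  assumes "0 < \<kappa>" "dilation_ineq \<mu> \<Omega> \<kappa>" "f 0 < t" "measure \<mu> {x\<in>\<Omega>. f x < t} \<le> 1/2"
    and "y < \<kappa> * ln 2 * measure \<mu> {x\<in>\<Omega>. f x < t}"
  shows "\<forall>\<^sub>F \<epsilon> in at_right 0.
    y < measure \<mu> {x\<in>\<Omega>. f (((1 - \<epsilon>) / (1 + \<epsilon>)) *\<^sub>R x) < t \<and> t \<le> f x} / \<epsilon>"
proof -
  define K where "K = {x\<in>\<Omega>. f x < t}"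
  have "\<kappa> * (ln 2 * measure \<mu> K) \<le> \<kappa> * (- (1 - measure \<mu> K) * ln (1 - measure \<mu> K))"
    using ln_2_mul_le_neg_mult_ln[of "measure \<mu> K"] assms by (intro mult_left_mono) (auto simp: K_def)
  then have "\<kappa> * ln 2 * measure \<mu> K \<le> - \<kappa> * (1 - measure \<mu> K) * ln (1 - measure \<mu> K)"
    by (simp only: mult.assoc mult_minus_left mult_minus_right)
  moreover have "y < \<kappa> * ln 2 * measure \<mu> K" using assms(5) by (simp add: K_def)
  ultimately have "ereal y < ereal (- \<kappa> * (1 - measure \<mu> K) * ln (1 - measure \<mu> K))"
    by simp
  also have "\<dots> \<le> dil_measure \<mu> K"
    using assms sublevel_in_Ksym unfolding dilation_ineq_def K_def by blast
  finally have "ereal y < dil_measure \<mu> K" .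
  then have "\<forall>\<^sub>F \<epsilon> in at_right 0. y < (measure \<mu> (dil_set K \<epsilon>) - measure \<mu> K) / \<epsilon>"
    unfolding dil_measure_def by (auto dest: less_LiminfD)
  moreover have "\<forall>\<^sub>F \<epsilon> in at_right (0::real). 0 < \<epsilon> \<and> \<epsilon> < 1"
    unfolding eventually_at_right_field by (intro exI[of _ 1]) auto
  ultimately show ?thesis
  proof eventually_elim
    case (elim \<epsilon>)
    then have "(measure \<mu> (dil_set K \<epsilon>) - measure \<mu> K) / \<epsilon>
        \<le> (measure \<mu> {x\<in>\<Omega>. f (((1 - \<epsilon>) / (1 + \<epsilon>)) *\<^sub>R x) < t} - measure \<mu> K) / \<epsilon>"
      using measure_dil_set_sublevel_le unfolding K_def by (intro divide_right_mono) auto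
    with elim show ?case using measure_scaled_sublevel[of "(1 - \<epsilon>) / (1 + \<epsilon>)" t] by (simp add: K_def)
  qed
qed

lemma nn_integral_truncated_layer_cake:
  assumes "0 < m" "0 < p" "0 \<le> k"
  shows "(\<integral>\<^sup>+t. indicator {f 0<..m} t * ennreal (k * (p * t powr (- p - 1))) *
            emeasure \<mu> {x\<in>\<Omega>. f x < t \<and> t \<le> m} \<partial>lborel)
       = (\<integral>\<^sup>+x. indicator \<Omega> x * ennreal (k * (min (f x) m powr - p - m powr - p)) \<partial>\<mu>)"
proof -
  have "{x\<in>\<Omega>. f x < t \<and> t \<le> m} = {x\<in>\<Omega>. fext x < t \<and> t \<le> m}" for t by auto
  moreover have "(\<integral>\<^sup>+t. indicator {f 0<..m} t * ennreal (k * (p * t powr (- p - 1))) *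
            emeasure \<mu> {x\<in>\<Omega>. fext x < t \<and> t \<le> m} \<partial>lborel)
       = (\<integral>\<^sup>+x. indicator \<Omega> x * ennreal (k * (min (fext x) m powr - p - min m m powr - p)) \<partial>\<mu>)"
    using assms pos zero_mem f_zero_le
    by (intro nn_integral_layer_cake_powr sigma_finite) (auto simp: sets_\<mu> measurable_cong_sets[OF sets_\<mu> refl])
  moreover have "indicator \<Omega> x * ennreal (k * (min (fext x) m powr - p - min m m powr - p))
      = indicator \<Omega> x * ennreal (k * (min (f x) m powr - p - m powr - p))" for x
    by (cases "x \<in> \<Omega>") auto
  ultimately show ?thesis by simp
qed

lemma scaled_layer_eq:
  "0 \<le> c \<Longrightarrow> c \<le> 1 \<Longrightarrow>
    {x\<in>\<Omega>. f (c *\<^sub>R x) < t \<and> t \<le> f x} = {x\<in>\<Omega>. fext (c *\<^sub>R x) < t \<and> t \<le> fext x}"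
  by auto

lemma measurable_emeasure_scaled_layer:
  "0 \<le> c \<Longrightarrow> c \<le> 1 \<Longrightarrow>
    (\<lambda>t. emeasure \<mu> {x\<in>\<Omega>. f (c *\<^sub>R x) < t \<and> t \<le> f x}) \<in> borel_measurable borel"
  unfolding scaled_layer_eq
  by (intro measurable_emeasure_layer sigma_finite) (auto simp: measurable_cong_sets[OF sets_\<mu> refl] sets_\<mu>)

lemma nn_integral_quotient_layer_cake:
  assumes "0 < m" "0 < p" "0 \<le> c" "c \<le> 1" "0 < \<epsilon>"
  shows "(\<integral>\<^sup>+t. indicator {f 0<..m} t * ennreal (p * t powr (- p - 1) / \<epsilon>) *
            emeasure \<mu> {x\<in>\<Omega>. f (c *\<^sub>R x) < t \<and> t \<le> f x} \<partial>lborel)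
       = (\<integral>\<^sup>+x. indicator \<Omega> x * ennreal ((min (f (c *\<^sub>R x)) m powr - p - min (f x) m powr - p) / \<epsilon>) \<partial>\<mu>)"
proof -
  have "(\<integral>\<^sup>+t. indicator {f 0<..m} t * ennreal (1 / \<epsilon> * (p * t powr (- p - 1))) *
            emeasure \<mu> {x\<in>\<Omega>. fext (c *\<^sub>R x) < t \<and> t \<le> fext x} \<partial>lborel)
       = (\<integral>\<^sup>+x. indicator \<Omega> x * ennreal (1 / \<epsilon> * (min (fext (c *\<^sub>R x)) m powr - p - min (fext x) m powr - p)) \<partial>\<mu>)"
    using assms pos zero_mem f_zero_le scaleR_mem
    by (intro nn_integral_layer_cake_powr sigma_finite) (auto simp: sets_\<mu> measurable_cong_sets[OF sets_\<mu> refl])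
  moreover have "indicator \<Omega> x * ennreal (1 / \<epsilon> * (min (fext (c *\<^sub>R x)) m powr - p - min (fext x) m powr - p))
      = indicator \<Omega> x * ennreal ((min (f (c *\<^sub>R x)) m powr - p - min (f x) m powr - p) / \<epsilon>)" for x
    using assms by (cases "x \<in> \<Omega>") auto
  ultimately show ?thesis using assms by (simp add: scaled_layer_eq)
qed

lemma layer_mass_le_liminf:
  assumes "0 < \<kappa>" "dilation_ineq \<mu> \<Omega> \<kappa>" "f 0 < t" "t \<le> m" "measure \<mu> {x\<in>\<Omega>. f x < m} \<le> 1/2"
    and "0 < w" and e: "\<And>n. 0 < e n" "filterlim e (at_right 0) sequentially"
  shows "ennreal (\<kappa> * ln 2 * w) * emeasure \<mu> {x\<in>\<Omega>. f x < t \<and> t \<le> m}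
    \<le> liminf (\<lambda>n. ennreal (w / e n) * emeasure \<mu> {x\<in>\<Omega>. f (((1 - e n) / (1 + e n)) *\<^sub>R x) < t \<and> t \<le> f x})"
proof -
  define G where "G n = {x\<in>\<Omega>. f (((1 - e n) / (1 + e n)) *\<^sub>R x) < t \<and> t \<le> f x}" for n
  have "measure \<mu> {x\<in>\<Omega>. f x < t} \<le> measure \<mu> {x\<in>\<Omega>. f x < m}"
    using assms sets_sublevel by (intro finite_measure_mono) auto
  then have "ennreal (w * (\<kappa> * ln 2 * measure \<mu> {x\<in>\<Omega>. f x < t}))
      \<le> liminf (\<lambda>n. ennreal (w * (measure \<mu> (G n) / e n)))"
  proof (intro ennreal_mult_le_liminf[OF \<open>0 < w\<close>])
    fix y assume "y < \<kappa> * ln 2 * measure \<mu> {x\<in>\<Omega>. f x < t}"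
    then have "\<forall>\<^sub>F \<epsilon> in at_right 0.
        y < measure \<mu> {x\<in>\<Omega>. f (((1 - \<epsilon>) / (1 + \<epsilon>)) *\<^sub>R x) < t \<and> t \<le> f x} / \<epsilon>"
      using assms \<open>measure \<mu> {x\<in>\<Omega>. f x < t} \<le> _\<close> by (intro sublevel_growth) auto
    from filterlim_iff[THEN iffD1, OF e(2), rule_format, OF this]
    show "\<forall>\<^sub>F n in sequentially. y < measure \<mu> (G n) / e n" by (simp add: G_def)
  qed
  moreover have "{x\<in>\<Omega>. f x < t \<and> t \<le> m} = {x\<in>\<Omega>. f x < t}" using assms by auto
  moreover have "ennreal (w * (measure \<mu> (G n) / e n)) = ennreal (w / e n) * emeasure \<mu> (G n)" for n
    using e(1)[of n] \<open>0 < w\<close> by (simp add: emeasure_eq_measure flip: ennreal_mult')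
  ultimately show ?thesis
    using assms by (simp add: G_def emeasure_eq_measure ennreal_mult'' ac_simps)
qed

lemma liminf_quotient_lower:
  assumes "0 < \<kappa>" "dilation_ineq \<mu> \<Omega> \<kappa>" "0 < m" "measure \<mu> {x\<in>\<Omega>. f x < m} \<le> 1/2" "0 < p"
    and e: "\<And>n. 0 < e n" "\<And>n. e n < 1" "filterlim e (at_right 0) sequentially"
  shows "(\<integral>\<^sup>+x. indicator \<Omega> x * ennreal (\<kappa> * ln 2 * (min (f x) m powr - p - m powr - p)) \<partial>\<mu>)
    \<le> liminf (\<lambda>n. \<integral>\<^sup>+x. indicator \<Omega> x *
         ennreal ((min (f (((1 - e n) / (1 + e n)) *\<^sub>R x)) m powr - p - min (f x) m powr - p) / e n) \<partial>\<mu>)"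
proof -
  define c where "c n = (1 - e n) / (1 + e n)" for n
  have c: "0 \<le> c n" "c n \<le> 1" for n using e(1,2)[of n] by (auto simp: c_def)
  define w where "w t = p * t powr (- p - 1)" for t
  define G where "G n t = {x\<in>\<Omega>. f (c n *\<^sub>R x) < t \<and> t \<le> f x}" for n t
  have "(\<integral>\<^sup>+x. indicator \<Omega> x * ennreal (\<kappa> * ln 2 * (min (f x) m powr - p - m powr - p)) \<partial>\<mu>)
      = (\<integral>\<^sup>+t. indicator {f 0<..m} t * ennreal (\<kappa> * ln 2 * w t) *
            emeasure \<mu> {x\<in>\<Omega>. f x < t \<and> t \<le> m} \<partial>lborel)"
    using assms by (simp add: nn_integral_truncated_layer_cake w_def)
  also have "\<dots> \<le> (\<integral>\<^sup>+t. liminf (\<lambda>n. indicator {f 0<..m} t * ennreal (w t / e n) *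
            emeasure \<mu> (G n t)) \<partial>lborel)"
  proof (intro nn_integral_mono)
    fix t
    show "indicator {f 0<..m} t * ennreal (\<kappa> * ln 2 * w t) * emeasure \<mu> {x\<in>\<Omega>. f x < t \<and> t \<le> m}
        \<le> liminf (\<lambda>n. indicator {f 0<..m} t * ennreal (w t / e n) * emeasure \<mu> (G n t))"
    proof (cases "t \<in> {f 0<..m}")
      case True
      then have "0 < w t" using assms pos[OF zero_mem] by (simp add: w_def)
      with True show ?thesis
        using layer_mass_le_liminf[OF assms(1,2) _ _ assms(4) _ e(1,3)] by (simp add: G_def c_def)
    qed simp
  qed
  also have "\<dots> \<le> liminf (\<lambda>n. \<integral>\<^sup>+t. indicator {f 0<..m} t * ennreal (w t / e n) * emeasure \<mu> (G n t) \<partial>lborel)"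
    unfolding G_def using measurable_emeasure_scaled_layer[OF c] by (intro nn_integral_liminf) (simp add: w_def)
  also have "\<dots> = liminf (\<lambda>n. \<integral>\<^sup>+x. indicator \<Omega> x *
         ennreal ((min (f (c n *\<^sub>R x)) m powr - p - min (f x) m powr - p) / e n) \<partial>\<mu>)"
    using assms c by (simp add: G_def w_def nn_integral_quotient_layer_cake)
  finally show ?thesis by (simp add: c_def)
qed

lemma limsup_quotient_pointwise:
  assumes x: "x \<in> \<Omega>" and Phi: "Phi f x \<le> ereal (b * f x)" and "0 \<le> b" "0 < m" "0 < p"
    and e: "\<And>n. 0 < e n" "\<And>n. e n < 1" "filterlim e (at_right 0) sequentially"
  shows "limsup (\<lambda>n. ennreal ((min (f (((1 - e n) / (1 + e n)) *\<^sub>R x)) m powr - p - min (f x) m powr - p) / e n))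
    \<le> ennreal (p * b * f x powr - p)"
proof -
  define a where "a n = f (((1 - e n) / (1 + e n)) *\<^sub>R x)" for n
  have c: "0 \<le> (1 - e n) / (1 + e n)" "(1 - e n) / (1 + e n) \<le> 1" for n
    using e(1,2)[of n] by auto
  have a: "0 < a n" "a n \<le> f x" for n
    using x c pos scaleR_mem f_scaleR_le by (auto simp: a_def)
  have "(\<lambda>n. ((1 - e n) / (1 + e n)) *\<^sub>R x) \<longlonglongrightarrow> ((1 - 0) / (1 + 0)) *\<^sub>R x"
    using e(3) by (intro tendsto_intros) (auto simp: filterlim_at)
  then have "a \<longlonglongrightarrow> f x"
    unfolding a_def using x c scaleR_mem by (intro continuous_on_tendsto_compose[OF cont]) auto
  moreover have "\<forall>\<^sub>F n in sequentially. (f x - a n) / e n < y" if "b * f x < y" for y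
  proof -
    have "Phi f x < ereal y" using Phi that by (simp add: le_less_trans)
    then have "\<forall>\<^sub>F \<epsilon> in at_right 0. ereal ((f x - f (((1 - \<epsilon>) / (1 + \<epsilon>)) *\<^sub>R x)) / \<epsilon>) < ereal y"
      unfolding Phi_def by (rule Limsup_lessD)
    from filterlim_iff[THEN iffD1, OF e(3), rule_format, OF this] show ?thesis by (simp add: a_def)
  qed
  ultimately have "limsup (\<lambda>n. ennreal ((a n powr - p - f x powr - p) / e n))
      \<le> ennreal (p * f x powr (- p - 1) * (b * f x))"
    using a x pos[OF x] assms by (intro limsup_powr_neg_quotient_le) auto
  also have "p * f x powr (- p - 1) * (b * f x) = p * b * f x powr - p"
    using pos[OF x] by (simp add: powr_diff)
  finally have lim: "limsup (\<lambda>n. ennreal ((a n powr - p - f x powr - p) / e n)) \<le> ennreal (p * b * f x powr - p)" .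
  have "ennreal ((min (a n) m powr - p - min (f x) m powr - p) / e n) \<le> ennreal ((a n powr - p - f x powr - p) / e n)" for n
    using min_powr_neg_diff_le[OF a(1) a(2) \<open>0 < m\<close> \<open>0 < p\<close>] e(1)[of n]
    by (intro ennreal_leI divide_right_mono) auto
  then have "limsup (\<lambda>n. ennreal ((min (a n) m powr - p - min (f x) m powr - p) / e n))
      \<le> limsup (\<lambda>n. ennreal ((a n powr - p - f x powr - p) / e n))"
    by (intro Limsup_mono) auto
  with lim show ?thesis by (simp add: a_def)
qed

lemma quotient_le_domination:
  assumes "x \<in> \<Omega>" "0 \<le> c" "c \<le> 1" "0 < \<epsilon>" "0 < m" "0 < p"
    and "(f x powr p - f (c *\<^sub>R x) powr p) / \<epsilon> \<le> h"
  shows "(min (f (c *\<^sub>R x)) m powr - p - min (f x) m powr - p) / \<epsilon> \<le> h / f 0 powr (2 * p)"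
proof -
  define a where "a = f (c *\<^sub>R x)"
  have a: "0 < f 0" "f 0 \<le> a" "a \<le> f x"
    using assms pos zero_mem f_zero_le scaleR_mem f_scaleR_le by (auto simp: a_def)
  have "min a m powr - p - min (f x) m powr - p \<le> a powr - p - f x powr - p"
    using a assms by (intro min_powr_neg_diff_le) auto
  also have "\<dots> \<le> (f x powr p - a powr p) / f 0 powr (2 * p)"
    using a assms by (intro powr_neg_diff_le_powr_diff) auto
  finally have "(min a m powr - p - min (f x) m powr - p) / \<epsilon> \<le> ((f x powr p - a powr p) / f 0 powr (2 * p)) / \<epsilon>"
    using assms by (intro divide_right_mono) auto
  also have "\<dots> = ((f x powr p - a powr p) / \<epsilon>) / f 0 powr (2 * p)" by simp
  also have "\<dots> \<le> h / f 0 powr (2 * p)"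
    using assms a by (intro divide_right_mono) (auto simp: a_def)
  finally show ?thesis by (simp add: a_def)
qed

lemma limsup_quotient_upper:
  assumes "0 \<le> b" "0 < m" "0 < p"
    and e: "\<And>n. 0 < e n" "\<And>n. e n < 1" "filterlim e (at_right 0) sequentially"
    and h: "integrable \<mu> h"
      "\<And>x n. x \<in> \<Omega> \<Longrightarrow> (f x powr p - f (((1 - e n) / (1 + e n)) *\<^sub>R x) powr p) / e n \<le> h x"
    and Phi: "AE x in \<mu>. x \<in> \<Omega> \<longrightarrow> Phi f x \<le> ereal (b * f x)"
    and int: "integrable \<mu> (\<lambda>x. indicator \<Omega> x * f x powr - p)"
  shows "limsup (\<lambda>n. \<integral>\<^sup>+x. indicator \<Omega> x *
         ennreal ((min (f (((1 - e n) / (1 + e n)) *\<^sub>R x)) m powr - p - min (f x) m powr - p) / e n) \<partial>\<mu>)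
    \<le> ennreal (p * b * (\<integral>x. indicator \<Omega> x * f x powr - p \<partial>\<mu>))"
proof -
  define c where "c n = (1 - e n) / (1 + e n)" for n
  have c: "0 \<le> c n" "c n \<le> 1" for n using e(1,2)[of n] by (auto simp: c_def)
  define u where "u n x = indicator \<Omega> x * ennreal ((min (f (c n *\<^sub>R x)) m powr - p - min (f x) m powr - p) / e n)"
    for n x
  define L where "L = f 0 powr (2 * p)"
  have "u n = (\<lambda>x. indicator \<Omega> x * ennreal ((min (fext (c n *\<^sub>R x)) m powr - p - min (fext x) m powr - p) / e n))"
    for n using c by (auto simp: u_def fun_eq_iff indicator_def)
  then have u_meas: "u n \<in> borel_measurable \<mu>" for n
    by (simp add: measurable_cong_sets[OF sets_\<mu> refl])
  \<comment> \<open>reverse Fatou: the hypothesis on f powr p dominates the quotients uniformly in n\<close>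
  have bound: "u n x \<le> ennreal (h x / L)" for n x
  proof (cases "x \<in> \<Omega>")
    case True
    have "(f x powr p - f (c n *\<^sub>R x) powr p) / e n \<le> h x" using h(2)[OF True, of n] by (simp add: c_def)
    from quotient_le_domination[OF True c e(1) assms(2,3) this]
    show ?thesis using True by (simp add: u_def L_def ennreal_leI)
  qed (simp add: u_def)
  have "(\<integral>\<^sup>+x. ennreal (h x / L) \<partial>\<mu>) < \<infinity>"
    using integrableD(2)[OF integrable_divide[OF h(1)]] by (simp add: less_top)
  then have "limsup (\<lambda>n. integral\<^sup>N \<mu> (u n)) \<le> (\<integral>\<^sup>+x. limsup (\<lambda>n. u n x) \<partial>\<mu>)"
    using h(1) bound by (intro nn_integral_limsup u_meas) auto
  also have "\<dots> \<le> (\<integral>\<^sup>+x. ennreal (p * b * (indicator \<Omega> x * f x powr - p)) \<partial>\<mu>)"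
    using Phi
  proof (intro nn_integral_mono_AE, eventually_elim)
    case (elim x)
    show ?case
    proof (cases "x \<in> \<Omega>")
      case True
      then show ?thesis
        using limsup_quotient_pointwise[OF True _ assms(1-3) e] elim by (simp add: u_def c_def)
    qed (simp add: u_def Limsup_const)
  qed
  also have "\<dots> = ennreal (p * b * (\<integral>x. indicator \<Omega> x * f x powr - p \<partial>\<mu>))"
    using int assms by (subst nn_integral_eq_integral) (auto simp: indicator_def)
  finally show ?thesis unfolding u_def c_def .
qed

lemma inverse_moment_bound:
  assumes "0 < \<kappa>" "dilation_ineq \<mu> \<Omega> \<kappa>" "0 < m" "measure \<mu> {x\<in>\<Omega>. f x < m} \<le> 1/2"
    and "0 < p" "0 \<le> b" and QC: "(\<lambda>x. f x powr p) \<in> QC \<Omega> \<mu>"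
    and Phi: "AE x in \<mu>. x \<in> \<Omega> \<longrightarrow> Phi f x \<le> ereal (b * f x)"
    and int: "set_integrable \<mu> \<Omega> (\<lambda>x. f x powr - p)"
  shows "\<kappa> * ln 2 * ((LINT x:\<Omega>|\<mu>. f x powr - p) - m powr - p) \<le> p * b * (LINT x:\<Omega>|\<mu>. f x powr - p)"
proof -
  obtain h e where h: "integrable \<mu> h" and e_pos: "\<And>n. 0 < e n" and e_one: "\<And>n. e n < 1"
    and e_lim: "filterlim e (at_right 0) sequentially"
    and dom: "\<And>x n. x \<in> \<Omega> \<Longrightarrow> (f x powr p - f (((1 - e n) / (1 + e n)) *\<^sub>R x) powr p) / e n \<le> h x"
    by (rule QC_dominating_sequence[OF QC]) blast
  define I where "I = (\<integral>x. indicator \<Omega> x * f x powr - p \<partial>\<mu>)"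
  have int': "integrable \<mu> (\<lambda>x. indicator \<Omega> x * f x powr - p)"
    using int by (simp add: set_integrable_def)
  have "(\<integral>\<^sup>+x. ennreal (indicator \<Omega> x * (\<kappa> * ln 2 * (f x powr - p - m powr - p))) \<partial>\<mu>)
      \<le> (\<integral>\<^sup>+x. indicator \<Omega> x * ennreal (\<kappa> * ln 2 * (min (f x) m powr - p - m powr - p)) \<partial>\<mu>)"
  proof (intro nn_integral_mono)
    fix x
    show "ennreal (indicator \<Omega> x * (\<kappa> * ln 2 * (f x powr - p - m powr - p)))
      \<le> indicator \<Omega> x * ennreal (\<kappa> * ln 2 * (min (f x) m powr - p - m powr - p))"
      using assms pos[of x] by (cases "x \<in> \<Omega>") (auto intro!: ennreal_leI mult_left_mono powr_mono2')
  qed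
  also have "\<dots> \<le> liminf (\<lambda>n. \<integral>\<^sup>+x. indicator \<Omega> x *
         ennreal ((min (f (((1 - e n) / (1 + e n)) *\<^sub>R x)) m powr - p - min (f x) m powr - p) / e n) \<partial>\<mu>)"
    using assms e_pos e_one e_lim by (intro liminf_quotient_lower)
  also have "\<dots> \<le> limsup (\<lambda>n. \<integral>\<^sup>+x. indicator \<Omega> x *
         ennreal ((min (f (((1 - e n) / (1 + e n)) *\<^sub>R x)) m powr - p - min (f x) m powr - p) / e n) \<partial>\<mu>)"
    by (rule Liminf_le_Limsup) simp
  also have "\<dots> \<le> ennreal (p * b * I)"
    unfolding I_def using assms e_pos e_one e_lim h dom int' by (intro limsup_quotient_upper)
  finally have "(\<integral>x. indicator \<Omega> x * (\<kappa> * ln 2 * (f x powr - p - m powr - p)) \<partial>\<mu>) \<le> p * b * I"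
    using assms by (intro integral_real_bounded) (auto simp: I_def int' intro!: integral_nonneg_AE)
  moreover have "(\<integral>x. indicator \<Omega> x * (\<kappa> * ln 2 * (f x powr - p - m powr - p)) \<partial>\<mu>)
      = (\<integral>x. \<kappa> * ln 2 * (indicator \<Omega> x * f x powr - p) - \<kappa> * ln 2 * m powr - p * indicator \<Omega> x \<partial>\<mu>)"
    by (intro Bochner_Integration.integral_cong) (auto simp: indicator_def algebra_simps)
  also have "\<dots> = \<kappa> * ln 2 * (I - m powr - p)"
    using int' full sets_\<mu> by (subst Bochner_Integration.integral_diff)
      (auto simp: I_def right_diff_distrib emeasure_eq_measure)
  ultimately show ?thesis by (simp add: I_def set_lebesgue_integral_def)
qed

lemma measure_sublevel_le_half:
  assumes "levy_mean \<mu> \<Omega> f m"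
  shows "measure \<mu> {x\<in>\<Omega>. f x < m} \<le> 1/2"
proof -
  have "{x\<in>\<Omega>. f x \<ge> m} = \<Omega> - {x\<in>\<Omega>. f x < m}" by auto
  then have "measure \<mu> {x\<in>\<Omega>. f x \<ge> m} = 1 - measure \<mu> {x\<in>\<Omega>. f x < m}"
    using sets_sublevel sets_\<mu> full by (simp add: finite_measure_Diff)
  then show ?thesis using assms by (simp add: levy_mean_def)
qed

lemma set_integral_powr_pos:
  assumes "set_integrable \<mu> \<Omega> (\<lambda>x. f x powr q)"
  shows "0 < (LINT x:\<Omega>|\<mu>. f x powr q)"
proof -
  have int: "integrable \<mu> (\<lambda>x. indicator \<Omega> x * f x powr q)"
    using assms by (simp add: set_integrable_def)
  have "(\<integral>x. indicator \<Omega> x * f x powr q \<partial>\<mu>) \<noteq> 0"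
  proof
    assume "(\<integral>x. indicator \<Omega> x * f x powr q \<partial>\<mu>) = 0"
    then have "AE x in \<mu>. indicator \<Omega> x * f x powr q = 0"
      using int by (subst integral_nonneg_eq_0_iff_AE[symmetric]) auto
    then have "AE x in \<mu>. x \<notin> \<Omega>"
      by (rule eventually_mono) (use pos in \<open>fastforce simp: indicator_def\<close>)
    then have "\<Omega> \<in> null_sets \<mu>" using sets_\<mu> by (subst AE_iff_null_sets) auto
    then show False using full by (simp add: measure_def null_sets_def)
  qed
  moreover have "0 \<le> (\<integral>x. indicator \<Omega> x * f x powr q \<partial>\<mu>)"
    by (intro integral_nonneg_AE) (simp add: indicator_def)
  ultimately have "0 < (\<integral>x. indicator \<Omega> x * f x powr q \<partial>\<mu>)" by linarith
  then show ?thesis by (simp add: set_lebesgue_integral_def)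
qed

lemma AE_Phi_le_of_esssup:
  assumes "esssup_on \<mu> \<Omega> (\<lambda>x. Phi f x / ereal (f x)) = ereal b"
  shows "AE x in \<mu>. x \<in> \<Omega> \<longrightarrow> Phi f x \<le> ereal (b * f x)"
  using AE_le_esssup_on[OF assms]
proof eventually_elim
  case (elim x)
  show ?case
  proof
    assume "x \<in> \<Omega>"
    with elim pos[of x] show "Phi f x \<le> ereal (b * f x)"
      by (cases "Phi f x") (auto simp: divide_le_eq mult.commute)
  qed
qed

end

theorem propositionp:
  fixes \<mu> :: "'a::euclidean_space measure" and \<Omega> :: "'a set"
    and f :: "'a \<Rightarrow> real" and \<kappa> p m :: real
  assumes prob: "prob_space \<mu>" and borel: "sets \<mu> = sets borel"
    and dom: "sym_convex_domain \<Omega>" and supp: "measure \<mu> \<Omega> = 1"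
    and kappa: "\<kappa> > 0" and dil: "dilation_ineq \<mu> \<Omega> \<kappa>"
    and fpos: "\<forall>x\<in>\<Omega>. f x > 0" and fcont: "continuous_on \<Omega> f"
    and fsym: "sym_fun_on \<Omega> f" and fqc: "quasi_convex_on \<Omega> f"
    and beta_pos: "0 < esssup_on \<mu> \<Omega> (\<lambda>x. Phi f x / ereal (f x))"
    and beta_fin: "esssup_on \<mu> \<Omega> (\<lambda>x. Phi f x / ereal (f x)) < \<infinity>"
    and p: "0 < p"
      "p < 1 / (real_of_ereal (esssup_on \<mu> \<Omega> (\<lambda>x. Phi f x / ereal (f x))) / (\<kappa> * ln 2))"
    and fpQC: "(\<lambda>x. f x powr p) \<in> QC \<Omega> \<mu>"
    and fmp: "set_integrable \<mu> \<Omega> (\<lambda>x. f x powr (- p))"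
    and med: "levy_mean \<mu> \<Omega> f m"
  shows "let \<beta> = real_of_ereal (esssup_on \<mu> \<Omega> (\<lambda>x. Phi f x / ereal (f x))) / (\<kappa> * ln 2)
         in m \<le> (exp 1 / (1 - \<beta> * p)) powr \<beta> * (LINT x:\<Omega>|\<mu>. f x powr (- p)) powr (- 1 / p)"
proof -
  interpret sym_qc_setting \<mu> \<Omega> f
    using prob borel dom supp fpos fcont fsym fqc by (simp add: sym_qc_setting_def)
  obtain b where b: "esssup_on \<mu> \<Omega> (\<lambda>x. Phi f x / ereal (f x)) = ereal b" "0 < b"
    using beta_pos beta_fin by (cases "esssup_on \<mu> \<Omega> (\<lambda>x. Phi f x / ereal (f x))") auto
  define \<beta> where "\<beta> = b / (\<kappa> * ln 2)"
  define I where "I = (LINT x:\<Omega>|\<mu>. f x powr - p)"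
  have "0 < \<beta>" using b kappa by (simp add: \<beta>_def)
  moreover have "p < 1 / \<beta>" using p(2) b by (simp add: \<beta>_def)
  ultimately have t: "0 < \<beta> * p" "\<beta> * p < 1" using p(1) by (simp_all add: field_simps)
  have pb: "p * b = \<beta> * p * (\<kappa> * ln 2)" using kappa by (simp add: \<beta>_def)
  have "m \<le> (exp 1 / (1 - \<beta> * p)) powr (\<beta> * p / p) * I powr (- 1 / p)"
  proof (cases "0 < m")
    case True
    have "\<kappa> * ln 2 * (I - m powr - p) \<le> \<beta> * p * (\<kappa> * ln 2) * I"
      unfolding I_def pb[symmetric] using kappa dil True p fpQC fmp b
      by (intro inverse_moment_bound measure_sublevel_le_half[OF med] AE_Phi_le_of_esssup) auto
    then have "I - m powr - p \<le> \<beta> * p * I" using kappa by (simp add: mult.assoc mult.left_commute)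
    then have "I * (1 - \<beta> * p) \<le> m powr - p" by (simp add: algebra_simps)
    then show ?thesis
      using t True p set_integral_powr_pos[OF fmp]
      by (intro le_powr_of_inverse_moment_bound) (auto simp: I_def pos_le_divide_eq)
  qed (simp add: order_trans[of m 0])
  then show ?thesis using p b by (simp add: \<beta>_def I_def)
qed

end
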